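(* The space $(\mathbb{Q}_Q(\mathbb{R}^n),\mathcal{G})$ is positively curved in the sense of Alexandrov: for all $A,B,C\in\mathbb{Q}_Q(\mathbb{R}^n)$, every geodesic $\gamma$ from $A$ to $B$ and every $t\in[0,1]$, $$\mathcal{G}^2(\gamma(t),C)\ge (1-t)\mathcal{G}^2(A,C)+t\,\mathcal{G}^2(B,C)-t(1-t)\mathcal{G}^2(A,B).$$
   Context: $\mathbb{Q}_Q(\mathbb{R}^n)$ denotes the set of unordered $Q$-tuples of points of $\mathbb{R}^n$, written $\sum_{i=1}^Q[[a_i]]$; two such sums are equal iff the tuples agree up to a permutation. The metric is $\mathcal{G}\big(\sum_i[[a_i]],\sum_i[[b_i]]\big)=\min_{\sigma}\big(\sum_{i=1}^Q|a_i-b_{\sigma(i)}|^2\big)^{1/2}$ over permutations $\sigma$ of $\{1,\dots,Q\}$. A geodesic from $A$ to $B$ is a curve $\gamma:[0,1]\to\mathbb{Q}_Q(\mathbb{R}^n)$ with $\gamma(0)=A$, $\gamma(1)=B$ and $\mathcal{G}(\gamma(s),\gamma(t))=|t-s|\,\mathcal{G}(A,B)$ for all $s,t\in[0,1]$. *)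

theory Defs
  imports "HOL-Analysis.Analysis" "HOL-Library.Multiset"
begin

text \<open>Unordered Q-tuples of points of R^n are multisets of size Q.\<close>
definition Qpoints :: "nat \<Rightarrow> (real^'n) multiset set" where
  "Qpoints Q = {T. size T = Q}"

definition Gdist :: "(real^'n) multiset \<Rightarrow> (real^'n) multiset \<Rightarrow> real" where
  "Gdist A B = (let a = SOME a. mset a = A; b = SOME b. mset b = B; Q = length a in
     Min ((\<lambda>\<sigma>. sqrt (\<Sum>i<Q. (norm (a ! i - b ! \<sigma> i))\<^sup>2)) ` {\<sigma>. \<sigma> permutes {..<Q}}))"

definition is_geodesic :: "nat \<Rightarrow> (real \<Rightarrow> (real^'n) multiset) \<Rightarrow> (real^'n) multiset
    \<Rightarrow> (real^'n) multiset \<Rightarrow> bool" where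
  "is_geodesic Q \<gamma> A B \<longleftrightarrow> (\<forall>t\<in>{0..1}. \<gamma> t \<in> Qpoints Q) \<and> \<gamma> 0 = A \<and> \<gamma> 1 = B \<and>
     (\<forall>s\<in>{0..1}. \<forall>t\<in>{0..1}. Gdist (\<gamma> s) (\<gamma> t) = \<bar>t - s\<bar> * Gdist A B)"

end

theory Submission
  imports Defs
begin

text \<open>Let \<open>P = \<gamma> t\<close> and \<open>d = \<G>(A,B)\<close>, so that \<open>\<G>(A,P) = t d\<close> and \<open>\<G>(P,B) = (1-t) d\<close>.
  Enumerate \<open>P\<close> as \<open>p\<close> and enumerate \<open>A\<close>, \<open>B\<close>, \<open>C\<close> as \<open>a\<close>, \<open>b\<close>, \<open>c\<close> so that each is matched
  optimally to \<open>p\<close> index by index. In a Hilbert space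
  \<open>|x - ((1-t) a + t b)|\<^sup>2 = (1-t)|x - a|\<^sup>2 + t|x - b|\<^sup>2 - t(1-t)|a - b|\<^sup>2\<close>.
  Summed over the indices with \<open>x = p\<close>, and since the matching of \<open>a\<close> with \<open>b\<close> costs at least
  \<open>d\<^sup>2\<close>, this forces \<open>p = (1-t) a + t b\<close> and makes that matching optimal when \<open>0 < t < 1\<close>.
  Summed with \<open>x = c\<close> it gives the inequality, because the matchings of \<open>a\<close> and \<open>b\<close> with \<open>c\<close>
  cost at least \<open>\<G>\<^sup>2(A,C)\<close> and \<open>\<G>\<^sup>2(B,C)\<close>.\<close>

definition match_cost :: "'a::real_normed_vector list \<Rightarrow> 'a list \<Rightarrow> real" where
  "match_cost a b = (\<Sum>i<length a. (norm (a ! i - b ! i))\<^sup>2)"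

lemma match_cost_nonneg: "match_cost a b \<ge> 0"
  by (simp add: match_cost_def sum_nonneg)

lemma match_cost_commute: "length a = length b \<Longrightarrow> match_cost a b = match_cost b a"
  by (simp add: match_cost_def norm_minus_commute)

lemma match_cost_eq_0_iff:
  assumes "length a = length b"
  shows "match_cost a b = 0 \<longleftrightarrow> a = b"
  using assms by (auto simp: match_cost_def sum_nonneg_eq_0_iff intro: nth_equalityI)

lemma match_cost_permute_list:
  assumes "length b = length a" "\<pi> permutes {..<length a}"
  shows "match_cost (permute_list \<pi> a) (permute_list \<pi> b) = match_cost a b"
proof -
  have "match_cost (permute_list \<pi> a) (permute_list \<pi> b)
      = (\<Sum>i<length a. (\<lambda>j. (norm (a ! j - b ! j))\<^sup>2) (\<pi> i))"
    using assms by (simp add: match_cost_def permute_list_nth)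
  also have "\<dots> = match_cost a b"
    unfolding match_cost_def by (rule sum.reindex_bij_betw[OF permutes_imp_bij[OF assms(2)]])
  finally show ?thesis .
qed

lemma power2_norm_diff_convex_combination:
  fixes a b x :: "'a::real_inner"
  shows "(norm (x - ((1 - t) *\<^sub>R a + t *\<^sub>R b)))\<^sup>2
       = (1 - t) * (norm (x - a))\<^sup>2 + t * (norm (x - b))\<^sup>2 - t * (1 - t) * (norm (a - b))\<^sup>2"
  by (simp add: power2_norm_eq_inner inner_diff_left inner_diff_right inner_add_left
      inner_add_right inner_commute algebra_simps)

lemma match_cost_convex_combination:
  fixes a b c :: "'a::real_inner list"
  assumes "length b = length a" "length c = length a"
  shows "match_cost (map2 (\<lambda>x y. (1 - t) *\<^sub>R x + t *\<^sub>R y) a b) c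
       = (1 - t) * match_cost a c + t * match_cost b c - t * (1 - t) * match_cost a b"
  using assms
  by (simp add: match_cost_def norm_minus_commute[of _ "c ! _"]
      power2_norm_diff_convex_combination sum.distrib sum_subtractf sum_distrib_left)

lemma between_eq_convex_combination:
  fixes a b p :: "'a::real_inner list"
  assumes len: "length a = length p" "length b = length p"
    and t: "0 \<le> t" "t \<le> 1"
    and ap: "match_cost a p \<le> (t * d)\<^sup>2" and pb: "match_cost p b \<le> ((1 - t) * d)\<^sup>2"
    and ab: "d\<^sup>2 \<le> match_cost a b"
  shows "p = map2 (\<lambda>x y. (1 - t) *\<^sub>R x + t *\<^sub>R y) a b"
    and "t * (1 - t) * match_cost a b = t * (1 - t) * d\<^sup>2"
proof -
  let ?m = "map2 (\<lambda>x y. (1 - t) *\<^sub>R x + t *\<^sub>R y) a b"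
  have "match_cost ?m p = (1 - t) * match_cost a p + t * match_cost b p - t * (1 - t) * match_cost a b"
    using len by (intro match_cost_convex_combination) auto
  then have cost: "match_cost ?m p = (1 - t) * match_cost a p + t * match_cost p b - t * (1 - t) * match_cost a b"
    by (simp only: match_cost_commute[OF len(2)])
  have "(1 - t) * match_cost a p + t * match_cost p b \<le> (1 - t) * (t * d)\<^sup>2 + t * ((1 - t) * d)\<^sup>2"
    using ap pb t by (intro add_mono mult_left_mono) auto
  also have "\<dots> = t * (1 - t) * d\<^sup>2"
    by (simp add: power2_eq_square algebra_simps)
  finally have "match_cost ?m p \<le> t * (1 - t) * d\<^sup>2 - t * (1 - t) * match_cost a b"
    using cost by linarith
  moreover have "t * (1 - t) * d\<^sup>2 \<le> t * (1 - t) * match_cost a b"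
    using ab t by (intro mult_left_mono) auto
  ultimately have "match_cost ?m p = 0" "t * (1 - t) * match_cost a b = t * (1 - t) * d\<^sup>2"
    using match_cost_nonneg[of ?m p] by linarith+
  then show "p = ?m" and "t * (1 - t) * match_cost a b = t * (1 - t) * d\<^sup>2"
    using len match_cost_eq_0_iff[of ?m p] by auto
qed

lemma Gdist_eq_Min_match_cost:
  assumes "size B = size A"
  obtains a0 b0 where "mset a0 = A" "mset b0 = B"
    "Gdist A B = Min ((\<lambda>\<sigma>. sqrt (match_cost a0 (permute_list \<sigma> b0))) ` {\<sigma>. \<sigma> permutes {..<size A}})"
proof
  define a0 where "a0 = (SOME a. mset a = A)"
  define b0 where "b0 = (SOME b. mset b = B)"
  show a0: "mset a0 = A" and b0: "mset b0 = B"
    unfolding a0_def b0_def by (meson ex_mset someI_ex)+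
  have len: "length a0 = size A" "length b0 = size A"
    using a0 b0 assms by (metis size_mset)+
  have cost: "sqrt (\<Sum>i<size A. (norm (a0 ! i - b0 ! \<sigma> i))\<^sup>2) = sqrt (match_cost a0 (permute_list \<sigma> b0))"
    if "\<sigma> permutes {..<size A}" for \<sigma>
    using that len by (simp add: match_cost_def permute_list_nth)
  have "Gdist A B = Min ((\<lambda>\<sigma>. sqrt (\<Sum>i<size A. (norm (a0 ! i - b0 ! \<sigma> i))\<^sup>2)) ` {\<sigma>. \<sigma> permutes {..<size A}})"
    unfolding Gdist_def Let_def a0_def[symmetric] b0_def[symmetric] len(1) ..
  also have "\<dots> = Min ((\<lambda>\<sigma>. sqrt (match_cost a0 (permute_list \<sigma> b0))) ` {\<sigma>. \<sigma> permutes {..<size A}})"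
    using cost by (intro arg_cong[where f = Min] image_cong) auto
  finally show "Gdist A B = Min ((\<lambda>\<sigma>. sqrt (match_cost a0 (permute_list \<sigma> b0))) ` {\<sigma>. \<sigma> permutes {..<size A}})" .
qed

lemma Gdist_attained:
  assumes "size B = size A"
  obtains a b where "mset a = A" "mset b = B" "Gdist A B = sqrt (match_cost a b)"
proof -
  obtain a0 b0 where a0: "mset a0 = A" and b0: "mset b0 = B"
    and G: "Gdist A B = Min ((\<lambda>\<sigma>. sqrt (match_cost a0 (permute_list \<sigma> b0))) ` {\<sigma>. \<sigma> permutes {..<size A}})"
    using Gdist_eq_Min_match_cost[OF assms] .
  have "finite {\<sigma>. \<sigma> permutes {..<size A}}" "{\<sigma>. \<sigma> permutes {..<size A}} \<noteq> {}"
    using finite_permutations permutes_id by blast+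
  then have "Gdist A B \<in> (\<lambda>\<sigma>. sqrt (match_cost a0 (permute_list \<sigma> b0))) ` {\<sigma>. \<sigma> permutes {..<size A}}"
    unfolding G by (intro Min_in) auto
  then obtain \<sigma> where "\<sigma> permutes {..<size A}" "Gdist A B = sqrt (match_cost a0 (permute_list \<sigma> b0))"
    by blast
  with a0 b0 assms show thesis
    by (intro that[of a0 "permute_list \<sigma> b0"]) auto
qed

lemma Gdist_nonneg: "size B = size A \<Longrightarrow> Gdist A B \<ge> 0"
  by (metis Gdist_attained real_sqrt_ge_zero match_cost_nonneg)

lemma Gdist_power2_le_match_cost:
  assumes "mset a = A" "mset b = B" "size B = size A"
  shows "(Gdist A B)\<^sup>2 \<le> match_cost a b"
proof -
  obtain a0 b0 where a0: "mset a0 = A" and b0: "mset b0 = B"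
    and G: "Gdist A B = Min ((\<lambda>\<sigma>. sqrt (match_cost a0 (permute_list \<sigma> b0))) ` {\<sigma>. \<sigma> permutes {..<size A}})"
    using Gdist_eq_Min_match_cost[OF assms(3)] .
  have len: "length a0 = size A" "length b0 = size A" "length a = size A" "length b = size A"
    using assms a0 b0 by (metis size_mset)+
  obtain \<pi> where \<pi>: "\<pi> permutes {..<size A}" "permute_list \<pi> a0 = a"
    using mset_eq_permutation[of a a0] a0 assms(1) len by auto
  obtain \<rho> where \<rho>: "\<rho> permutes {..<size A}" "permute_list \<rho> b0 = b"
    using mset_eq_permutation[of b b0] b0 assms(2) len by auto
  define \<sigma> where "\<sigma> = \<rho> \<circ> inv \<pi>"
  have \<sigma>: "\<sigma> permutes {..<size A}"
    unfolding \<sigma>_def using \<pi> \<rho> by (simp add: permutes_compose permutes_inv)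
  have "\<sigma> \<circ> \<pi> = \<rho>"
    unfolding \<sigma>_def by (simp add: comp_assoc permutes_inv_o[OF \<pi>(1)])
  then have "b = permute_list \<pi> (permute_list \<sigma> b0)"
    using \<pi> \<rho> len by (simp flip: permute_list_compose)
  then have "match_cost a b = match_cost a0 (permute_list \<sigma> b0)"
    using \<pi> len match_cost_permute_list[of "permute_list \<sigma> b0" a0 \<pi>] by simp
  then have "Gdist A B \<le> sqrt (match_cost a b)"
    unfolding G using \<sigma> by (intro Min_le) (auto simp: finite_permutations)
  then show ?thesis
    using Gdist_nonneg[OF assms(3)] match_cost_nonneg[of a b] by (metis real_sqrt_le_iff real_sqrt_unique)
qed

lemma Gdist_power2_attained_left:
  assumes "mset a = A" "size B = size A"
  obtains b where "mset b = B" "(Gdist A B)\<^sup>2 = match_cost a b"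
proof -
  obtain a0 b0 where a0: "mset a0 = A" and b0: "mset b0 = B" and G: "Gdist A B = sqrt (match_cost a0 b0)"
    using Gdist_attained[OF assms(2)] .
  have len: "length b0 = length a0"
    using a0 b0 assms(2) by (metis size_mset)
  obtain \<pi> where \<pi>: "\<pi> permutes {..<length a0}" "permute_list \<pi> a0 = a"
    using mset_eq_permutation[of a a0] a0 assms(1) by auto
  show thesis
  proof (rule that[of "permute_list \<pi> b0"])
    show "mset (permute_list \<pi> b0) = B"
      using \<pi> len b0 by simp
    show "(Gdist A B)\<^sup>2 = match_cost a (permute_list \<pi> b0)"
      using \<pi> len G match_cost_permute_list[of b0 a0 \<pi>] match_cost_nonneg[of a0 b0] by simp
  qed
qed

lemma Gdist_power2_attained_right:
  assumes "mset b = B" "size B = size A"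
  obtains a where "mset a = A" "(Gdist A B)\<^sup>2 = match_cost a b"
proof -
  obtain a0 b0 where a0: "mset a0 = A" and b0: "mset b0 = B" and G: "Gdist A B = sqrt (match_cost a0 b0)"
    using Gdist_attained[OF assms(2)] .
  have len: "length b0 = length a0"
    using a0 b0 assms(2) by (metis size_mset)
  obtain \<rho> where \<rho>: "\<rho> permutes {..<length a0}" "permute_list \<rho> b0 = b"
    using mset_eq_permutation[of b b0] b0 assms(1) len by auto
  show thesis
  proof (rule that[of "permute_list \<rho> a0"])
    show "mset (permute_list \<rho> a0) = A"
      using \<rho> a0 by simp
    show "(Gdist A B)\<^sup>2 = match_cost (permute_list \<rho> a0) b"
      using \<rho> len G match_cost_permute_list[of b0 a0 \<rho>] match_cost_nonneg[of a0 b0] by simp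
  qed
qed

lemma is_geodesic_Gdist_split:
  assumes "is_geodesic Q \<gamma> A B" "t \<in> {0..1}"
  shows "Gdist A (\<gamma> t) = t * Gdist A B" and "Gdist (\<gamma> t) B = (1 - t) * Gdist A B"
proof -
  have "\<gamma> 0 = A" "\<gamma> 1 = B" and G: "\<forall>s\<in>{0..1}. \<forall>u\<in>{0..1}. Gdist (\<gamma> s) (\<gamma> u) = \<bar>u - s\<bar> * Gdist A B"
    using assms(1) unfolding is_geodesic_def by blast+
  then show "Gdist A (\<gamma> t) = t * Gdist A B" and "Gdist (\<gamma> t) B = (1 - t) * Gdist A B"
    using G[rule_format, of 0 t] G[rule_format, of t 1] assms(2) by auto
qed

theorem theorem3p2:
  fixes A B C :: "(real^'n) multiset" and Q :: nat and \<gamma> :: "real \<Rightarrow> (real^'n) multiset" and t :: real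
  assumes "A \<in> Qpoints Q" "B \<in> Qpoints Q" "C \<in> Qpoints Q"
    and "is_geodesic Q \<gamma> A B"
    and "t \<in> {0..1}"
  shows "(Gdist (\<gamma> t) C)\<^sup>2 \<ge> (1 - t) * (Gdist A C)\<^sup>2 + t * (Gdist B C)\<^sup>2 - t * (1 - t) * (Gdist A B)\<^sup>2"
proof -
  have size: "size A = Q" "size B = Q" "size C = Q" "size (\<gamma> t) = Q" and t: "0 \<le> t" "t \<le> 1"
    using assms by (auto simp: Qpoints_def is_geodesic_def)
  obtain p where p: "mset p = \<gamma> t"
    using ex_mset by blast
  obtain a where a: "mset a = A" "match_cost a p = (t * Gdist A B)\<^sup>2"
    using Gdist_power2_attained_right[OF p] is_geodesic_Gdist_split[OF assms(4,5)] size by metis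
  obtain b where b: "mset b = B" "match_cost p b = ((1 - t) * Gdist A B)\<^sup>2"
    using Gdist_power2_attained_left[OF p] is_geodesic_Gdist_split[OF assms(4,5)] size by metis
  obtain c where c: "mset c = C" "(Gdist (\<gamma> t) C)\<^sup>2 = match_cost p c"
    using Gdist_power2_attained_left[OF p] size by metis
  have len: "length a = length p" "length b = length p" "length c = length p"
    using a b c p size by (metis size_mset)+
  have p_eq: "p = map2 (\<lambda>x y. (1 - t) *\<^sub>R x + t *\<^sub>R y) a b"
    and ab: "t * (1 - t) * match_cost a b = t * (1 - t) * (Gdist A B)\<^sup>2"
    using between_eq_convex_combination[OF len(1,2) t] a b Gdist_power2_le_match_cost[OF a(1) b(1)] size
    by auto
  have "match_cost p c = (1 - t) * match_cost a c + t * match_cost b c - t * (1 - t) * match_cost a b"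
    unfolding p_eq using len by (intro match_cost_convex_combination) auto
  then have "(Gdist (\<gamma> t) C)\<^sup>2 = (1 - t) * match_cost a c + t * match_cost b c - t * (1 - t) * (Gdist A B)\<^sup>2"
    using c(2) ab by linarith
  moreover have "(1 - t) * (Gdist A C)\<^sup>2 + t * (Gdist B C)\<^sup>2 \<le> (1 - t) * match_cost a c + t * match_cost b c"
    using Gdist_power2_le_match_cost[OF a(1) c(1)] Gdist_power2_le_match_cost[OF b(1) c(1)] size t
    by (intro add_mono mult_left_mono) auto
  ultimately show ?thesis
    by linarith
qed

end
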